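(* Let $n\ge 1$ be an integer and $\beta>0$. Let $(s,z)$ be the Nielsen–Olesen vortex profile, i.e. real functions on $(0,\infty)$ solving \begin{align*} &s''+\tfrac{s'}{r}-\big[z^2+\tfrac{\beta}{2}(s^2-1)\big]s=0,\\ &z''+\tfrac{z'}{r}-\tfrac{z}{r^2}-zs^2=0, \end{align*} with $s=s_0r^n(1+o(1))$ and $z=\frac{n}{r}+z_0r+o(r)$ as $r\to 0$, and $s\to 1$, $z\to 0$ exponentially as $r\to\infty$. Then the coefficient $z_0$ in the expansion $z=\frac{n}{r}+z_0r+\dots$ near the origin is negative.
   Context: $s$ is the normalized Higgs magnitude and $z-\frac{n}{r}$ the dimensionless azimuthal $Z$ potential of the Nielsen–Olesen vortex with winding number $n$; $\beta=(M_H/M_Z)^2$. *)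

theory Defs
  imports "HOL-Analysis.Analysis" "HOL-Library.Landau_Symbols"
begin

end

theory Submission
  imports Defs "HOL-Real_Asymp.Real_Asymp"
begin

text \<open>
  Write \<open>w = r z\<close> and \<open>Q = w'/r = z' + z/r\<close>; the \<open>z\<close>-equation says exactly \<open>Q' = z s\<^sup>2\<close>.
  Near the origin \<open>w = n + z\<^sub>0 r\<^sup>2 + o(r\<^sup>2)\<close>, and \<open>w \<rightarrow> 0\<close> at infinity. Suppose \<open>z\<^sub>0 \<ge> 0\<close>
  and let \<open>a\<close> be the first radius where \<open>w\<close> drops to \<open>n/2\<close>. On \<open>(0,a)\<close> we have \<open>z > 0\<close>, so
  \<open>Q\<close> is nondecreasing; comparing \<open>w(p) - n \<le> Q(r) p\<^sup>2/2\<close> (for \<open>p \<le> r\<close>) with the expansion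
  gives \<open>Q \<ge> 2 z\<^sub>0 \<ge> 0\<close>, so \<open>w\<close> is nondecreasing on \<open>(0,a]\<close> and \<open>w(a) \<ge> n\<close>, a contradiction.
  Of the Higgs field only \<open>s\<^sup>2 \<ge> 0\<close> enters.
\<close>

lemma first_crossing_below:
  fixes w :: "real \<Rightarrow> real"
  assumes cont: "continuous_on {0<..} w" and lim: "(w \<longlongrightarrow> L) (at_right 0)"
    and lim_top: "(w \<longlongrightarrow> M) at_top" and "M < c" "c < L"
  obtains a where "0 < a" "w a \<le> c" "\<And>t. 0 < t \<Longrightarrow> t < a \<Longrightarrow> c < w t"
proof -
  have "\<forall>\<^sub>F t in at_right 0. c < w t"
    using order_tendstoD(1)[OF lim \<open>c < L\<close>] .
  then obtain b where "b > 0" and above: "\<And>t. 0 < t \<Longrightarrow> t < b \<Longrightarrow> c < w t"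
    by (auto simp: eventually_at_right_field)
  have "\<forall>\<^sub>F t in at_top. b \<le> t \<and> w t < c"
    using order_tendstoD(2)[OF lim_top \<open>M < c\<close>] by (intro eventually_conj eventually_ge_at_top)
  then obtain R where "b \<le> R" "w R \<le> c"
    using eventually_happens'[OF trivial_limit_at_top_linorder] by (auto intro: less_imp_le)
  define K where "K = {b/2..R} \<inter> w -` {..c}"
  have "R \<in> K"
    using \<open>b > 0\<close> \<open>b \<le> R\<close> \<open>w R \<le> c\<close> by (simp add: K_def)
  moreover have "closed K"
    unfolding K_def using \<open>b > 0\<close>
    by (intro continuous_closed_preimage continuous_on_subset[OF cont]) auto
  moreover have "bdd_below K"
    unfolding K_def by (rule bdd_belowI[of _ "b/2"]) auto
  ultimately have "Inf K \<in> K"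
    using closed_contains_Inf by blast
  show thesis
  proof
    show "0 < Inf K" "w (Inf K) \<le> c"
      using \<open>Inf K \<in> K\<close> \<open>b > 0\<close> by (auto simp: K_def)
    show "c < w t" if "0 < t" "t < Inf K" for t
    proof (cases "t < b")
      case False
      then have "t \<notin> K"
        using that cInf_lower[OF _ \<open>bdd_below K\<close>] by force
      then show ?thesis
        using False that \<open>Inf K \<in> K\<close> \<open>b > 0\<close> by (auto simp: K_def)
    qed (use above that in auto)
  qed
qed

lemma mono_on_greaterThanLessThan_if_deriv_nonneg:
  fixes f f' :: "real \<Rightarrow> real"
  assumes "\<And>x. a < x \<Longrightarrow> x < b \<Longrightarrow> (f has_real_derivative f' x) (at x)"
    and "\<And>x. a < x \<Longrightarrow> x < b \<Longrightarrow> 0 \<le> f' x"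
  shows "mono_on {a<..<b} f"
proof (rule mono_onI)
  fix t u assume tu: "t \<in> {a<..<b}" "u \<in> {a<..<b}" "t \<le> u"
  show "f t \<le> f u"
  proof (rule DERIV_nonneg_imp_nondecreasing[OF \<open>t \<le> u\<close>])
    fix x assume "t \<le> x" "x \<le> u"
    then show "\<exists>y. (f has_real_derivative y) (at x) \<and> 0 \<le> y"
      using tu assms by force
  qed
qed

lemma monotone_flux_deviation_le:
  fixes w Q :: "real \<Rightarrow> real"
  assumes dw: "\<And>t. 0 < t \<Longrightarrow> t < a \<Longrightarrow> (w has_real_derivative t * Q t) (at t)"
    and Q: "mono_on {0<..<a} Q" and lim: "(w \<longlongrightarrow> L) (at_right 0)"
    and "0 < p" "p \<le> r" "r < a"
  shows "w p - L \<le> Q r * p^2 / 2"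
proof -
  define g where "g t = w t - Q r * t^2 / 2" for t
  have "g p \<le> g t" if "0 < t" "t \<le> p" for t
  proof (rule DERIV_nonpos_imp_nonincreasing[OF \<open>t \<le> p\<close>])
    fix x assume x: "t \<le> x" "x \<le> p"
    have "Q x \<le> Q r"
      using x that assms by (intro mono_onD[OF Q]) auto
    then have "x * Q x - Q r * x \<le> 0"
      using x that by (simp add: mult_nonneg_nonpos flip: right_diff_distrib')
    moreover have "(g has_real_derivative x * Q x - Q r * x) (at x)"
      unfolding g_def using x that assms
      by (auto intro!: derivative_eq_intros dw)
    ultimately show "\<exists>y. (g has_real_derivative y) (at x) \<and> y \<le> 0"
      by blast
  qed
  then have "\<forall>\<^sub>F t in at_right 0. g p \<le> g t"
    using eventually_at_right_real[OF \<open>0 < p\<close>] by (auto elim: eventually_mono)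
  moreover have "(g \<longlongrightarrow> L - Q r * 0^2 / 2) (at_right 0)"
    unfolding g_def by (intro tendsto_intros lim) simp
  ultimately have "g p \<le> L"
    using tendsto_lowerbound by fastforce
  then show ?thesis
    by (simp add: g_def)
qed

lemma monotone_flux_ge_twice_quotient_limit:
  fixes w Q :: "real \<Rightarrow> real"
  assumes dw: "\<And>t. 0 < t \<Longrightarrow> t < a \<Longrightarrow> (w has_real_derivative t * Q t) (at t)"
    and Q: "mono_on {0<..<a} Q" and lim: "(w \<longlongrightarrow> L) (at_right 0)"
    and quot: "((\<lambda>p. (w p - L) / p^2) \<longlongrightarrow> k) (at_right 0)"
    and "0 < r" "r < a"
  shows "2 * k \<le> Q r"
proof -
  have "(w p - L) / p^2 \<le> Q r / 2" if "0 < p" "p < r" for p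
    using monotone_flux_deviation_le[OF dw Q lim, of p r] that \<open>r < a\<close>
    by (simp add: divide_le_eq)
  then have "\<forall>\<^sub>F p in at_right 0. (w p - L) / p^2 \<le> Q r / 2"
    using eventually_at_right_real[OF \<open>0 < r\<close>] by (auto elim: eventually_mono)
  then have "k \<le> Q r / 2"
    by (rule tendsto_upperbound[OF quot]) simp
  then show ?thesis
    by simp
qed

lemma monotone_flux_limit_le:
  fixes w Q :: "real \<Rightarrow> real"
  assumes dw: "\<And>t. 0 < t \<Longrightarrow> t < a \<Longrightarrow> (w has_real_derivative t * Q t) (at t)"
    and cont: "continuous_on {0<..a} w"
    and Q: "mono_on {0<..<a} Q" and lim: "(w \<longlongrightarrow> L) (at_right 0)"
    and quot: "((\<lambda>p. (w p - L) / p^2) \<longlongrightarrow> k) (at_right 0)"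
    and "0 \<le> k" "0 < a"
  shows "L \<le> w a"
proof -
  have "w t \<le> w a" if "0 < t" "t \<le> a" for t
  proof (rule DERIV_nonneg_imp_increasing_open[OF \<open>t \<le> a\<close>])
    fix x assume x: "t < x" "x < a"
    have "0 \<le> Q x"
      using monotone_flux_ge_twice_quotient_limit[OF dw Q lim quot, of x] x that \<open>0 \<le> k\<close> by simp
    then show "\<exists>y. (w has_real_derivative y) (at x) \<and> 0 \<le> y"
      using dw[of x] x that by force
  qed (use that in \<open>auto intro: continuous_on_subset[OF cont]\<close>)
  then have "\<forall>\<^sub>F t in at_right 0. w t \<le> w a"
    using eventually_at_right_real[OF \<open>0 < a\<close>] by (auto elim: eventually_mono)
  then show ?thesis
    using tendsto_upperbound[OF lim] by simp
qed

lemma has_real_derivative_mult_ident: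
  assumes "(z has_real_derivative z') (at r)" "r \<noteq> 0"
  shows "((\<lambda>t. t * z t) has_real_derivative r * (z' + z r / r)) (at r)"
  using assms by (auto intro!: derivative_eq_intros simp: field_simps)

lemma bessel_flux_has_real_derivative:
  fixes z z' z'' s :: "real \<Rightarrow> real"
  assumes "(z has_real_derivative z' r) (at r)" "(z' has_real_derivative z'' r) (at r)"
    and "z'' r + z' r / r - z r / r^2 - z r * (s r)^2 = 0" "r \<noteq> 0"
  shows "((\<lambda>t. z' t + z t / t) has_real_derivative z r * (s r)^2) (at r)"
proof -
  have "((\<lambda>t. z' t + z t / t) has_real_derivative z'' r + (z' r * r - z r) / r^2) (at r)"
    using assms by (auto intro!: derivative_eq_intros simp: power2_eq_square)
  moreover have "z'' r = z r / r^2 - z' r / r + z r * (s r)^2"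
    using assms(3) by linarith
  then have "z'' r + (z' r * r - z r) / r^2 = z r * (s r)^2"
    using \<open>r \<noteq> 0\<close> by (simp add: field_simps power2_eq_square)
  ultimately show ?thesis
    by simp
qed

lemma smallo_expansion_imp_tendsto_quotient:
  fixes z :: "real \<Rightarrow> real"
  assumes "(\<lambda>r. z r - c / r - k * r) \<in> o[at_right 0](\<lambda>r. r)"
  shows "((\<lambda>r. (r * z r - c) / r^2) \<longlongrightarrow> k) (at_right 0)"
proof -
  have "((\<lambda>r. k + (z r - c / r - k * r) / r) \<longlongrightarrow> k + 0) (at_right 0)"
    using smalloD_tendsto[OF assms] by (intro tendsto_intros)
  moreover have "\<forall>\<^sub>F r in at_right 0. k + (z r - c / r - k * r) / r = (r * z r - c) / r^2"
    by (auto simp: eventually_at_right_field field_simps power2_eq_square intro!: exI[of _ 1])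
  ultimately show ?thesis
    using tendsto_cong by force
qed

lemma tendsto_quotient_imp_tendsto:
  fixes w :: "real \<Rightarrow> real"
  assumes "((\<lambda>r. (w r - c) / r^2) \<longlongrightarrow> k) (at_right 0)"
  shows "(w \<longlongrightarrow> c) (at_right 0)"
proof -
  have "((\<lambda>r. c + r^2 * ((w r - c) / r^2)) \<longlongrightarrow> c + 0^2 * k) (at_right 0)"
    using assms by (intro tendsto_intros)
  moreover have "\<forall>\<^sub>F r in at_right 0. c + r^2 * ((w r - c) / r^2) = w r"
    by (auto simp: eventually_at_right_field intro!: exI[of _ 1])
  ultimately show ?thesis
    using tendsto_cong by force
qed

lemma exp_decay_imp_mult_ident_tendsto_zero:
  fixes z :: "real \<Rightarrow> real"
  assumes "\<exists>C a. a > 0 \<and> (\<forall>\<^sub>F r in at_top. \<bar>z r\<bar> \<le> C * exp (- a * r))"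
  shows "((\<lambda>r. r * z r) \<longlongrightarrow> 0) at_top"
proof -
  obtain C a where "a > 0" and bound: "\<forall>\<^sub>F r in at_top. \<bar>z r\<bar> \<le> C * exp (- a * r)"
    using assms by blast
  have "\<forall>\<^sub>F r in at_top. norm (r * z r) \<le> r * C * exp (- a * r)"
    using bound eventually_gt_at_top[of 0]
    by eventually_elim (auto simp: abs_mult intro: order_trans[OF mult_left_mono])
  moreover have "((\<lambda>r. r * C * exp (- a * r)) \<longlongrightarrow> 0) at_top"
    using \<open>a > 0\<close> by real_asymp
  ultimately show ?thesis
    by (rule Lim_null_comparison)
qed

theorem lemma2:
  fixes n :: nat and \<beta> s0 z0 :: real
    and s s' s'' z z' z'' :: "real \<Rightarrow> real"
  assumes n: "n \<ge> 1" and beta: "\<beta> > 0"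
    and ds: "\<And>r. r > 0 \<Longrightarrow> (s has_real_derivative s' r) (at r)"
    and ds': "\<And>r. r > 0 \<Longrightarrow> (s' has_real_derivative s'' r) (at r)"
    and dz: "\<And>r. r > 0 \<Longrightarrow> (z has_real_derivative z' r) (at r)"
    and dz': "\<And>r. r > 0 \<Longrightarrow> (z' has_real_derivative z'' r) (at r)"
    and eq_s: "\<And>r. r > 0 \<Longrightarrow>
      s'' r + s' r / r - ((z r)^2 + \<beta> / 2 * ((s r)^2 - 1)) * s r = 0"
    and eq_z: "\<And>r. r > 0 \<Longrightarrow>
      z'' r + z' r / r - z r / r^2 - z r * (s r)^2 = 0"
    and s_zero: "(\<lambda>r. s r - s0 * r ^ n) \<in> o[at_right 0](\<lambda>r. s0 * r ^ n)"
    and z_zero: "(\<lambda>r. z r - real n / r - z0 * r) \<in> o[at_right 0](\<lambda>r. r)"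
    and s_inf: "\<exists>C a. a > 0 \<and> (\<forall>\<^sub>F r in at_top. \<bar>s r - 1\<bar> \<le> C * exp (- a * r))"
    and z_inf: "\<exists>C a. a > 0 \<and> (\<forall>\<^sub>F r in at_top. \<bar>z r\<bar> \<le> C * exp (- a * r))"
  shows "z0 < 0"
proof (rule ccontr)
  assume "\<not> z0 < 0"
  define w where "w r = r * z r" for r
  define Q where "Q r = z' r + z r / r" for r
  have dw: "(w has_real_derivative r * Q r) (at r)" if "r > 0" for r
    unfolding w_def Q_def using has_real_derivative_mult_ident[OF dz] that by simp
  have dQ: "(Q has_real_derivative z r * (s r)^2) (at r)" if "r > 0" for r
    unfolding Q_def using dz[OF that] dz'[OF that] eq_z[OF that] that
    by (intro bessel_flux_has_real_derivative) auto
  have cont: "continuous_on {0<..} w"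
    using dw by (auto intro: DERIV_continuous continuous_at_imp_continuous_on)
  have quot: "((\<lambda>r. (w r - n) / r^2) \<longlongrightarrow> z0) (at_right 0)"
    unfolding w_def by (rule smallo_expansion_imp_tendsto_quotient[OF z_zero])
  note lim = tendsto_quotient_imp_tendsto[OF quot]
  have "(w \<longlongrightarrow> 0) at_top"
    unfolding w_def using z_inf by (rule exp_decay_imp_mult_ident_tendsto_zero)
  moreover have "0 < real n / 2" "real n / 2 < n"
    using n by auto
  ultimately obtain a where "0 < a" "w a \<le> n / 2"
    and above: "\<And>t. 0 < t \<Longrightarrow> t < a \<Longrightarrow> n / 2 < w t"
    using first_crossing_below[OF cont lim] by metis
  have "mono_on {0<..<a} Q"
  proof (rule mono_on_greaterThanLessThan_if_deriv_nonneg[OF dQ])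
    fix t assume "0 < t" "t < a"
    then have "0 < t * z t"
      using above[of t] unfolding w_def by simp
    then show "0 \<le> z t * (s t)^2"
      using \<open>0 < t\<close> by (simp add: zero_less_mult_iff)
  qed
  then have "n \<le> w a"
    using \<open>\<not> z0 < 0\<close> \<open>0 < a\<close>
    by (intro monotone_flux_limit_le[OF dw continuous_on_subset[OF cont] _ lim quot]) auto
  then show False
    using \<open>w a \<le> n / 2\<close> n by simp
qed

end
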